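(* Let $K\ge1$ and $n\ge1$. Let $p^p_1,\dots,p^p_K$ be fixed predictive densities and let $\tilde y_1,\dots,\tilde y_n$ be i.i.d. from a distribution $Q$ (with $y\sim Q$ denoting a generic draw). Suppose there is $s>0$ such that for each $k$ the log loss $-\log p^p_k(\tilde y)$ is sub-Gaussian: for all $\lambda\in\mathbb{R}$, $$\log\mathrm{E}\big[e^{\lambda(-\log p^p_k(\tilde y)-\mathrm{E}[-\log p^p_k(y)])}\big]\le \frac{\lambda^2 s^2}{2}.$$ For $w^p$ in the probability simplex $S^K$ define the pointwise out-of-sample Jensen gap $$J_{out,i}(w^p)=-\sum_k w^p_k\log p^p_k(\tilde y_i)+\log\sum_k w^p_k p^p_k(\tilde y_i).$$ Then there exists $s'>0$ such that for every $w^p\in S^K$, the random variable $\sum_{i=1}^n J_{out,i}(w^p)$ is sub-Gaussian with variance (proxy) at most $n s'$, i.e. $\log\mathrm{E}\big[e^{\lambda(Z-\mathrm{E}Z)}\big]\le \lambda^2 n s'/2$ for all $\lambda\in\mathbb{R}$, where $Z=\sum_i J_{out,i}(w^p)$.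
   Context: $S^K$ is the set of probability vectors with $K$ components. A real random variable $Z$ is called sub-Gaussian with variance (proxy) $\sigma^2$ if $\log\mathrm{E}[e^{\lambda(Z-\mathrm{E}Z)}]\le\lambda^2\sigma^2/2$ for all $\lambda\in\mathbb{R}$. *)

theory Defs
  imports "HOL-Probability.Probability"
begin

definition prob_simplex :: "nat \<Rightarrow> (nat \<Rightarrow> real) set" where
  "prob_simplex K = {w. (\<forall>k<K. 0 \<le> w k) \<and> (\<Sum>k<K. w k) = 1}"

definition subgaussian :: "'a measure \<Rightarrow> ('a \<Rightarrow> real) \<Rightarrow> real \<Rightarrow> bool" where
  "subgaussian M Z sigma2 \<longleftrightarrow> integrable M Z \<and>
     (\<forall>l::real. integrable M (\<lambda>x. exp (l * (Z x - integral\<^sup>L M Z))) \<and>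
        ln (integral\<^sup>L M (\<lambda>x. exp (l * (Z x - integral\<^sup>L M Z)))) \<le> l\<^sup>2 * sigma2 / 2)"

definition jensen_gap :: "nat \<Rightarrow> (nat \<Rightarrow> 'a \<Rightarrow> real) \<Rightarrow> (nat \<Rightarrow> real) \<Rightarrow> 'a \<Rightarrow> real" where
  "jensen_gap K p w y = - (\<Sum>k<K. w k * ln (p k y)) + ln (\<Sum>k<K. w k * p k y)"

end

theory Submission
  imports Defs
begin

(* Every density lies between exp (-L) and exp L, where L = sum_k |log p_k|, so both the
   averaged log density and the log of the mixture density lie in [-L, L]: the Jensen gap is
   bounded by 2L uniformly in the weights.  Since each log loss is sub-Gaussian, L has
   exponential moments E exp (u L) <= exp (c (1 + u^2)), and a centred variable dominated by
   such an L is sub-Gaussian: for |lambda| <= 1 by a second-order Taylor bound on exp, for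
   |lambda| > 1 by the crude bound exp (lambda X) <= exp (|lambda| L).  Sub-Gaussian variance
   proxies add over the n independent observations. *)

lemma mult_le_abs_mult_1_plus_sq: "(u :: real) * b \<le> \<bar>b\<bar> * (1 + u\<^sup>2)"
proof -
  have "0 \<le> (\<bar>u\<bar> - 1)\<^sup>2" by simp
  then have "\<bar>u\<bar> \<le> 1 + u\<^sup>2" by (simp add: power2_diff)
  then have "\<bar>u\<bar> * \<bar>b\<bar> \<le> (1 + u\<^sup>2) * \<bar>b\<bar>" by (rule mult_right_mono) simp
  moreover have "u * b \<le> \<bar>u\<bar> * \<bar>b\<bar>" using abs_ge_self[of "u * b"] by (simp add: abs_mult)
  ultimately show ?thesis by (simp add: mult.commute)
qed

lemma ln_le_iff_le_exp: "0 < (x :: real) \<Longrightarrow> ln x \<le> y \<longleftrightarrow> x \<le> exp y"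
  by (metis exp_le_cancel_iff exp_ln)

lemma integral_exp_pos:
  fixes g :: "'a \<Rightarrow> real"
  assumes "prob_space M" and int: "integrable M (\<lambda>x. exp (g x))"
  shows "0 < (\<integral>x. exp (g x) \<partial>M)"
proof -
  interpret prob_space M by fact
  have "(\<integral>x. exp (g x) \<partial>M) \<noteq> 0"
  proof
    assume "(\<integral>x. exp (g x) \<partial>M) = 0"
    then have "AE x in M. exp (g x) = 0"
      using integral_nonneg_eq_0_iff_AE[OF int] by simp
    then show False by simp
  qed
  moreover have "0 \<le> (\<integral>x. exp (g x) \<partial>M)" by simp
  ultimately show ?thesis by linarith
qed

lemma exp_le_taylor2_abs: "exp (y :: real) \<le> 1 + y + y\<^sup>2 / 2 * exp \<bar>y\<bar>"
proof -
  obtain t where "\<bar>t\<bar> \<le> \<bar>y\<bar>" and exp_y: "exp y = 1 + y + exp t / 2 * y\<^sup>2"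
    using Maclaurin_exp_le[of y 2] by (auto simp: numeral_2_eq_2)
  then have "exp t * y\<^sup>2 \<le> exp \<bar>y\<bar> * y\<^sup>2" by (intro mult_right_mono) auto
  then show ?thesis unfolding exp_y by (simp add: mult.commute)
qed

lemma sq_le_4_exp: "0 \<le> (z :: real) \<Longrightarrow> z\<^sup>2 \<le> 4 * exp z"
proof -
  assume "0 \<le> z"
  moreover have "z / 2 \<le> exp (z / 2)" using exp_ge_add_one_self[of "z / 2"] by linarith
  ultimately have "(z / 2)\<^sup>2 \<le> (exp (z / 2))\<^sup>2" by (intro power_mono) auto
  also have "\<dots> = exp z" by (simp flip: exp_double)
  finally show ?thesis by (simp add: power_divide)
qed

lemma exp_mult_le_quadratic:
  fixes l x z :: real
  assumes "\<bar>l\<bar> \<le> 1" and "\<bar>x\<bar> \<le> z"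
  shows "exp (l * x) \<le> 1 + l * x + 2 * l\<^sup>2 * exp (2 * z)"
proof -
  have lx: "\<bar>l * x\<bar> \<le> z"
    using assms mult_mono[of "\<bar>l\<bar>" 1 "\<bar>x\<bar>" z] by (simp add: abs_mult)
  have "x\<^sup>2 \<le> z\<^sup>2" using power_mono[OF assms(2) abs_ge_zero, of 2] by simp
  then have "(l * x)\<^sup>2 \<le> l\<^sup>2 * z\<^sup>2" by (simp add: power_mult_distrib mult_left_mono)
  also have "\<dots> \<le> l\<^sup>2 * (4 * exp z)"
    using assms by (intro mult_left_mono sq_le_4_exp) auto
  finally have "(l * x)\<^sup>2 / 2 \<le> l\<^sup>2 * (4 * exp z) / 2"
    by (rule divide_right_mono) simp
  moreover have "exp \<bar>l * x\<bar> \<le> exp z" using lx by simp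
  ultimately have "(l * x)\<^sup>2 / 2 * exp \<bar>l * x\<bar> \<le> l\<^sup>2 * (4 * exp z) / 2 * exp z"
    by (rule mult_mono) auto
  also have "\<dots> = 2 * l\<^sup>2 * exp (2 * z)"
    unfolding mult_2 exp_add by simp
  finally show ?thesis
    using exp_le_taylor2_abs[of "l * x"] by (rule order_trans[rotated, OF add_left_mono])
qed

(* Unlike sub-Gaussianity, this uncentred bound survives absolute values and finite sums. *)
definition quadratic_mgf_bound :: "'a measure \<Rightarrow> ('a \<Rightarrow> real) \<Rightarrow> real \<Rightarrow> bool" where
  "quadratic_mgf_bound M Y c \<longleftrightarrow>
     (\<forall>u. integrable M (\<lambda>x. exp (u * Y x)) \<and>
        (\<integral>x. exp (u * Y x) \<partial>M) \<le> exp (c * (1 + u\<^sup>2)))"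

lemma quadratic_mgf_boundD:
  assumes "quadratic_mgf_bound M Y c"
  shows "integrable M (\<lambda>x. exp (u * Y x))" and "(\<integral>x. exp (u * Y x) \<partial>M) \<le> exp (c * (1 + u\<^sup>2))"
  using assms unfolding quadratic_mgf_bound_def by auto

lemma quadratic_mgf_bound_nonneg:
  assumes "prob_space M" and "quadratic_mgf_bound M Y c"
  shows "0 \<le> c"
proof -
  interpret prob_space M by fact
  have "1 \<le> exp c" using quadratic_mgf_boundD(2)[OF assms(2), of 0] by (simp add: prob_space)
  then show ?thesis by simp
qed

lemma quadratic_mgf_bound_mono:
  assumes "quadratic_mgf_bound M Y c" and "c \<le> c'"
  shows "quadratic_mgf_bound M Y c'"
  unfolding quadratic_mgf_bound_def
proof (intro allI conjI)
  fix u :: real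
  show "integrable M (\<lambda>x. exp (u * Y x))" by (rule quadratic_mgf_boundD(1)[OF assms(1)])
  have "c * (1 + u\<^sup>2) \<le> c' * (1 + u\<^sup>2)" using assms(2) by (intro mult_right_mono) auto
  then show "(\<integral>x. exp (u * Y x) \<partial>M) \<le> exp (c' * (1 + u\<^sup>2))"
    using quadratic_mgf_boundD(2)[OF assms(1), of u] by (meson exp_le_cancel_iff order_trans)
qed

lemma quadratic_mgf_bound_add_const:
  assumes "quadratic_mgf_bound M Y c"
  shows "quadratic_mgf_bound M (\<lambda>x. Y x + b) (c + \<bar>b\<bar>)"
  unfolding quadratic_mgf_bound_def
proof (intro allI conjI)
  fix u :: real
  have shift: "exp (u * (Y x + b)) = exp (u * b) * exp (u * Y x)" for x
    by (simp add: distrib_left mult_exp_exp)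
  show "integrable M (\<lambda>x. exp (u * (Y x + b)))"
    unfolding shift by (intro integrable_mult_right quadratic_mgf_boundD(1)[OF assms])
  have "exp (u * b) * exp (c * (1 + u\<^sup>2)) \<le> exp ((c + \<bar>b\<bar>) * (1 + u\<^sup>2))"
    using mult_le_abs_mult_1_plus_sq[of u b] by (simp add: mult_exp_exp distrib_right)
  moreover have "(\<integral>x. exp (u * (Y x + b)) \<partial>M) \<le> exp (u * b) * exp (c * (1 + u\<^sup>2))"
    unfolding shift using quadratic_mgf_boundD(2)[OF assms, of u] by simp
  ultimately show "(\<integral>x. exp (u * (Y x + b)) \<partial>M) \<le> exp ((c + \<bar>b\<bar>) * (1 + u\<^sup>2))"
    by linarith
qed

lemma subgaussian_imp_quadratic_mgf_bound:
  assumes "prob_space M" and sg: "subgaussian M Y \<sigma>2" and "0 \<le> \<sigma>2"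
  shows "quadratic_mgf_bound M (\<lambda>x. a * Y x) (\<bar>a * integral\<^sup>L M Y\<bar> + a\<^sup>2 * \<sigma>2 / 2)"
  unfolding quadratic_mgf_bound_def
proof (intro allI conjI)
  fix u :: real
  define m where "m = integral\<^sup>L M Y"
  have split: "exp (u * (a * Y x)) = exp (u * a * m) * exp ((u * a) * (Y x - m))" for x
    by (simp add: mult_exp_exp algebra_simps)
  have int: "integrable M (\<lambda>x. exp ((u * a) * (Y x - m)))"
    and ln_le: "ln (\<integral>x. exp ((u * a) * (Y x - m)) \<partial>M) \<le> (u * a)\<^sup>2 * \<sigma>2 / 2"
    using sg unfolding subgaussian_def m_def by blast+
  show "integrable M (\<lambda>x. exp (u * (a * Y x)))"
    unfolding split by (intro integrable_mult_right int)
  have "(\<integral>x. exp ((u * a) * (Y x - m)) \<partial>M) \<le> exp ((u * a)\<^sup>2 * \<sigma>2 / 2)"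
    using ln_le ln_le_iff_le_exp[OF integral_exp_pos[OF assms(1) int]] by blast
  then have "(\<integral>x. exp (u * (a * Y x)) \<partial>M) \<le> exp (u * a * m + (u * a)\<^sup>2 * \<sigma>2 / 2)"
    unfolding split by (simp add: exp_add)
  also have "\<dots> \<le> exp ((\<bar>a * m\<bar> + a\<^sup>2 * \<sigma>2 / 2) * (1 + u\<^sup>2))"
  proof -
    have "u * a * m \<le> \<bar>a * m\<bar> * (1 + u\<^sup>2)"
      using mult_le_abs_mult_1_plus_sq[of u "a * m"] by (simp add: mult.assoc)
    moreover have "(u * a)\<^sup>2 * \<sigma>2 / 2 \<le> a\<^sup>2 * \<sigma>2 / 2 * (1 + u\<^sup>2)"
      using assms(3) by (simp add: power_mult_distrib algebra_simps)
    ultimately show ?thesis by (simp add: distrib_right)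
  qed
  finally show "(\<integral>x. exp (u * (a * Y x)) \<partial>M)
      \<le> exp ((\<bar>a * integral\<^sup>L M Y\<bar> + a\<^sup>2 * \<sigma>2 / 2) * (1 + u\<^sup>2))"
    by (simp add: m_def)
qed

lemma exp_mult_sum_abs_le:
  fixes y :: "'i \<Rightarrow> real"
  assumes "finite I" and "I \<noteq> {}" and "0 \<le> u"
  shows "exp (u * (\<Sum>k\<in>I. \<bar>y k\<bar>))
    \<le> (\<Sum>k\<in>I. exp (u * card I * y k) + exp (- (u * card I) * y k))"
proof -
  have "Max ((\<lambda>k. \<bar>y k\<bar>) ` I) \<in> (\<lambda>k. \<bar>y k\<bar>) ` I"
    using assms by (intro Max_in) auto
  then obtain j where j: "j \<in> I" and max: "Max ((\<lambda>k. \<bar>y k\<bar>) ` I) = \<bar>y j\<bar>" by auto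
  have "(\<Sum>k\<in>I. \<bar>y k\<bar>) \<le> card I * \<bar>y j\<bar>"
    by (rule sum_bounded_above) (use assms(1) max in \<open>auto intro: Max_ge[THEN order_trans]\<close>)
  then have "exp (u * (\<Sum>k\<in>I. \<bar>y k\<bar>)) \<le> exp (u * card I * \<bar>y j\<bar>)"
    using assms(3) by (simp add: mult_left_mono mult.assoc)
  also have "\<dots> \<le> exp (u * card I * y j) + exp (- (u * card I) * y j)"
  proof (cases "0 \<le> y j")
    case True
    then show ?thesis using exp_gt_zero[of "- (u * card I) * y j"] by simp
  next
    case False
    then show ?thesis using exp_gt_zero[of "u * card I * y j"] by simp
  qed
  also have "\<dots> \<le> (\<Sum>k\<in>I. exp (u * card I * y k) + exp (- (u * card I) * y k))"
    by (rule member_le_sum[OF j]) (simp_all add: assms(1) add_nonneg_nonneg)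
  finally show ?thesis .
qed

lemma mgf_sum_abs_le:
  fixes c u :: real
  assumes "finite I" and "I \<noteq> {}" and "0 \<le> u"
    and meas: "\<And>k. k \<in> I \<Longrightarrow> Y k \<in> borel_measurable M"
    and bound: "\<And>k. k \<in> I \<Longrightarrow> quadratic_mgf_bound M (Y k) c"
  shows "integrable M (\<lambda>x. exp (u * (\<Sum>k\<in>I. \<bar>Y k x\<bar>)))"
    and "(\<integral>x. exp (u * (\<Sum>k\<in>I. \<bar>Y k x\<bar>)) \<partial>M)
      \<le> 2 * real (card I) * exp (c * (1 + (u * real (card I))\<^sup>2))"
proof -
  define N where "N = real (card I)"
  define B where "B x = (\<Sum>k\<in>I. exp (u * N * Y k x) + exp (- (u * N) * Y k x))" for x
  have int_pm: "integrable M (\<lambda>x. exp (v * Y k x))" if "k \<in> I" for k v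
    using quadratic_mgf_boundD(1)[OF bound[OF that]] .
  have int_neg: "integrable M (\<lambda>x. exp (- (v * Y k x)))" if "k \<in> I" for k v
    using int_pm[OF that, of "- v"] by simp
  have B_int: "integrable M B"
    unfolding B_def by (intro Bochner_Integration.integrable_sum Bochner_Integration.integrable_add int_pm)
  have exp_le_B: "exp (u * (\<Sum>k\<in>I. \<bar>Y k x\<bar>)) \<le> B x" for x
    unfolding B_def N_def using exp_mult_sum_abs_le[OF assms(1-3)] .
  have B_nonneg: "0 \<le> B x" for x unfolding B_def by (intro sum_nonneg add_nonneg_nonneg) auto
  have S_meas: "(\<lambda>x. \<Sum>k\<in>I. \<bar>Y k x\<bar>) \<in> borel_measurable M" using meas by measurable
  show int: "integrable M (\<lambda>x. exp (u * (\<Sum>k\<in>I. \<bar>Y k x\<bar>)))"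
    by (rule Bochner_Integration.integrable_bound[OF B_int]) (use S_meas exp_le_B B_nonneg in auto)
  have "(\<integral>x. exp (u * (\<Sum>k\<in>I. \<bar>Y k x\<bar>)) \<partial>M) \<le> integral\<^sup>L M B"
    by (intro integral_mono int B_int exp_le_B)
  also have "\<dots> = (\<Sum>k\<in>I. (\<integral>x. exp (u * N * Y k x) \<partial>M)
      + (\<integral>x. exp (- (u * N) * Y k x) \<partial>M))"
    unfolding B_def
    by (simp add: int_pm int_neg Bochner_Integration.integral_sum Bochner_Integration.integral_add
        Bochner_Integration.integrable_add)
  also have "\<dots> \<le> (\<Sum>k\<in>I. exp (c * (1 + (u * N)\<^sup>2)) + exp (c * (1 + (- (u * N))\<^sup>2)))"
    by (intro sum_mono add_mono quadratic_mgf_boundD(2) bound)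
  also have "\<dots> = 2 * real (card I) * exp (c * (1 + (u * real (card I))\<^sup>2))" by (simp add: N_def)
  finally show "(\<integral>x. exp (u * (\<Sum>k\<in>I. \<bar>Y k x\<bar>)) \<partial>M)
      \<le> 2 * real (card I) * exp (c * (1 + (u * real (card I))\<^sup>2))" .
qed

lemma mgf_nonneg_le_1:
  fixes Z :: "'a \<Rightarrow> real"
  assumes "prob_space M" and Z_meas: "Z \<in> borel_measurable M"
    and Z_nonneg: "\<And>x. 0 \<le> Z x" and "u \<le> 0"
  shows "integrable M (\<lambda>x. exp (u * Z x))" and "(\<integral>x. exp (u * Z x) \<partial>M) \<le> 1"
proof -
  interpret prob_space M by fact
  have le1: "exp (u * Z x) \<le> 1" for x
    using assms(4) Z_nonneg[of x] by (simp add: mult_nonpos_nonneg)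
  show int: "integrable M (\<lambda>x. exp (u * Z x))"
    by (rule Bochner_Integration.integrable_bound[of _ "\<lambda>_. 1 :: real"]) (use Z_meas le1 in auto)
  have "(\<integral>x. exp (u * Z x) \<partial>M) \<le> (\<integral>x. 1 \<partial>M)"
    by (intro integral_mono int le1) simp
  then show "(\<integral>x. exp (u * Z x) \<partial>M) \<le> 1" by (simp add: prob_space)
qed

lemma quadratic_mgf_bound_sum_abs:
  fixes c :: real
  assumes "prob_space M" and "finite I" and "I \<noteq> {}"
    and meas: "\<And>k. k \<in> I \<Longrightarrow> Y k \<in> borel_measurable M"
    and bound: "\<And>k. k \<in> I \<Longrightarrow> quadratic_mgf_bound M (Y k) c"
  shows "quadratic_mgf_bound M (\<lambda>x. \<Sum>k\<in>I. \<bar>Y k x\<bar>) (ln (2 * real (card I)) + c * (real (card I))\<^sup>2)"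
  unfolding quadratic_mgf_bound_def
proof (intro allI)
  interpret prob_space M by fact
  fix u :: real
  define N where "N = real (card I)"
  have "0 < card I" using assms(2,3) by (simp add: card_gt_0_iff)
  then have N1: "1 \<le> N" by (simp add: N_def)
  have c0: "0 \<le> c" using assms(3) bound quadratic_mgf_bound_nonneg[OF assms(1)] by blast
  have lnN: "0 \<le> ln (2 * N)" using N1 by simp
  show "integrable M (\<lambda>x. exp (u * (\<Sum>k\<in>I. \<bar>Y k x\<bar>))) \<and>
      (\<integral>x. exp (u * (\<Sum>k\<in>I. \<bar>Y k x\<bar>)) \<partial>M)
        \<le> exp ((ln (2 * real (card I)) + c * (real (card I))\<^sup>2) * (1 + u\<^sup>2))"
  proof (cases "0 \<le> u")
    case True
    have mgf: "integrable M (\<lambda>x. exp (u * (\<Sum>k\<in>I. \<bar>Y k x\<bar>)))"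
      "(\<integral>x. exp (u * (\<Sum>k\<in>I. \<bar>Y k x\<bar>)) \<partial>M) \<le> 2 * N * exp (c * (1 + (u * N)\<^sup>2))"
      unfolding N_def using mgf_sum_abs_le[OF assms(2,3) True] meas bound by blast+
    have "2 * N * exp (c * (1 + (u * N)\<^sup>2)) = exp (ln (2 * N) + c + c * N\<^sup>2 * u\<^sup>2)"
    proof -
      have "c * (1 + (u * N)\<^sup>2) = c + c * N\<^sup>2 * u\<^sup>2" by (simp add: power_mult_distrib algebra_simps)
      then show ?thesis using N1 by (simp add: exp_add)
    qed
    also have "\<dots> \<le> exp ((ln (2 * N) + c * N\<^sup>2) * (1 + u\<^sup>2))"
    proof -
      have "c * 1 \<le> c * N\<^sup>2" using N1 c0 by (intro mult_left_mono) auto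
      moreover have "0 \<le> ln (2 * N) * u\<^sup>2" using lnN by simp
      ultimately show ?thesis by (simp add: algebra_simps)
    qed
    finally show ?thesis using mgf unfolding N_def by (meson order_trans)
  next
    case False
    have S_meas: "(\<lambda>x. \<Sum>k\<in>I. \<bar>Y k x\<bar>) \<in> borel_measurable M" using meas by measurable
    have S_nonneg: "0 \<le> (\<Sum>k\<in>I. \<bar>Y k x\<bar>)" for x by (simp add: sum_nonneg)
    note mgf = mgf_nonneg_le_1[OF assms(1) S_meas S_nonneg, of u]
    have "1 \<le> exp ((ln (2 * N) + c * N\<^sup>2) * (1 + u\<^sup>2))" using lnN c0 by simp
    then show ?thesis using mgf False unfolding N_def by (meson order_trans not_le less_imp_le)
  qed
qed

lemma quadratic_mgf_bound_sum_abs_subgaussian: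
  fixes Y :: "'i \<Rightarrow> 'a \<Rightarrow> real"
  assumes "prob_space M" and "finite I" and "I \<noteq> {}"
    and meas: "\<And>k. k \<in> I \<Longrightarrow> Y k \<in> borel_measurable M"
    and sg: "\<And>k. k \<in> I \<Longrightarrow> subgaussian M (Y k) \<sigma>2" and "0 \<le> \<sigma>2"
  shows "\<exists>c. quadratic_mgf_bound M (\<lambda>x. \<Sum>k\<in>I. \<bar>a * Y k x\<bar>) c"
proof -
  define c where "c = (\<Sum>k\<in>I. \<bar>a * integral\<^sup>L M (Y k)\<bar>) + a\<^sup>2 * \<sigma>2 / 2"
  have "quadratic_mgf_bound M (\<lambda>x. a * Y k x) c" if "k \<in> I" for k
  proof (rule quadratic_mgf_bound_mono)
    show "quadratic_mgf_bound M (\<lambda>x. a * Y k x) (\<bar>a * integral\<^sup>L M (Y k)\<bar> + a\<^sup>2 * \<sigma>2 / 2)"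
      by (rule subgaussian_imp_quadratic_mgf_bound[OF assms(1) sg[OF that] assms(6)])
    show "\<bar>a * integral\<^sup>L M (Y k)\<bar> + a\<^sup>2 * \<sigma>2 / 2 \<le> c"
      unfolding c_def
      using member_le_sum[of k I "\<lambda>k. \<bar>a * integral\<^sup>L M (Y k)\<bar>"] that assms(2) by auto
  qed
  moreover have "(\<lambda>x. a * Y k x) \<in> borel_measurable M" if "k \<in> I" for k
    by (intro borel_measurable_times borel_measurable_const meas that)
  ultimately show ?thesis
    using quadratic_mgf_bound_sum_abs[OF assms(1-3), of "\<lambda>k x. a * Y k x" c] by blast
qed

lemma centered_mgf_le_if_abs_le:
  fixes X Z :: "'a \<Rightarrow> real"
  assumes "prob_space M" and X_meas: "X \<in> borel_measurable M" and EX: "integral\<^sup>L M X = 0"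
    and XZ: "AE x in M. \<bar>X x\<bar> \<le> Z x" and Z_bound: "quadratic_mgf_bound M Z C"
  shows "integrable M (\<lambda>x. exp (l * X x))"
    and "(\<integral>x. exp (l * X x) \<partial>M) \<le> exp (l\<^sup>2 * (2 * exp (5 * C)))"
proof -
  interpret prob_space M by fact
  have C0: "0 \<le> C" by (rule quadratic_mgf_bound_nonneg[OF assms(1) Z_bound])
  note Z_int = quadratic_mgf_boundD(1)[OF Z_bound] and Z_mgf = quadratic_mgf_boundD(2)[OF Z_bound]
  have dom: "AE x in M. exp (l * X x) \<le> exp (\<bar>l\<bar> * Z x)"
    using XZ
  proof eventually_elim
    case (elim x)
    have "l * X x \<le> \<bar>l\<bar> * \<bar>X x\<bar>" by (simp flip: abs_mult)
    also have "\<dots> \<le> \<bar>l\<bar> * Z x" by (intro mult_left_mono elim) simp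
    finally show ?case by simp
  qed
  show int: "integrable M (\<lambda>x. exp (l * X x))"
    by (rule Bochner_Integration.integrable_bound[OF Z_int[of "\<bar>l\<bar>"]]) (use X_meas dom in auto)
  show "(\<integral>x. exp (l * X x) \<partial>M) \<le> exp (l\<^sup>2 * (2 * exp (5 * C)))"
  proof (cases "\<bar>l\<bar> \<le> 1")
    case True
    have X_int: "integrable M X"
    proof (rule Bochner_Integration.integrable_bound[OF Z_int[of 1] X_meas])
      show "AE x in M. norm (X x) \<le> norm (exp (1 * Z x))"
        using XZ by eventually_elim (auto intro: order_trans[OF _ less_imp_le[OF exp_gt_self]])
    qed
    have quad_int: "integrable M (\<lambda>x. 1 + l * X x + 2 * l\<^sup>2 * exp (2 * Z x))"
      by (intro Bochner_Integration.integrable_add integrable_const integrable_mult_right X_int Z_int)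
    have "(\<integral>x. exp (l * X x) \<partial>M) \<le> (\<integral>x. 1 + l * X x + 2 * l\<^sup>2 * exp (2 * Z x) \<partial>M)"
      using XZ by (intro integral_mono_AE int quad_int) (auto intro: exp_mult_le_quadratic[OF True])
    also have "\<dots> = 1 + 2 * l\<^sup>2 * (\<integral>x. exp (2 * Z x) \<partial>M)"
      using X_int Z_int[of 2] EX by (simp add: prob_space)
    also have "\<dots> \<le> 1 + 2 * l\<^sup>2 * exp (5 * C)"
    proof -
      have "(\<integral>x. exp (2 * Z x) \<partial>M) \<le> exp (5 * C)" using Z_mgf[of 2] by (simp add: mult.commute)
      then show ?thesis by (intro add_left_mono mult_left_mono) simp_all
    qed
    also have "\<dots> \<le> exp (l\<^sup>2 * (2 * exp (5 * C)))"
      using exp_ge_add_one_self[of "l\<^sup>2 * (2 * exp (5 * C))"] by (simp add: mult_ac)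
    finally show ?thesis .
  next
    case False
    then have l2: "1 \<le> l\<^sup>2" using one_le_power[of "\<bar>l\<bar>" 2] by simp
    have "(\<integral>x. exp (l * X x) \<partial>M) \<le> (\<integral>x. exp (\<bar>l\<bar> * Z x) \<partial>M)"
      by (intro integral_mono_AE int Z_int dom)
    also have "\<dots> \<le> exp (C * (1 + l\<^sup>2))" using Z_mgf[of "\<bar>l\<bar>"] by simp
    also have "\<dots> \<le> exp (l\<^sup>2 * (2 * exp (5 * C)))"
    proof -
      have "C \<le> exp (5 * C)" using exp_ge_add_one_self[of "5 * C"] C0 by linarith
      then have "C * (1 + l\<^sup>2) \<le> exp (5 * C) * (2 * l\<^sup>2)"
        using l2 C0 by (intro mult_mono) auto
      then show ?thesis by (simp add: mult_ac)
    qed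
    finally show ?thesis .
  qed
qed

lemma subgaussian_if_abs_le:
  fixes f W :: "'a \<Rightarrow> real"
  assumes "prob_space M" and f_meas: "f \<in> borel_measurable M" and W_meas: "W \<in> borel_measurable M"
    and fW: "AE x in M. \<bar>f x\<bar> \<le> W x" and W_bound: "quadratic_mgf_bound M W c"
  shows "subgaussian M f (4 * exp (5 * (c + exp (2 * c))))"
proof -
  interpret prob_space M by fact
  have W_abs: "AE x in M. \<bar>W x\<bar> \<le> exp (1 * W x)"
    using fW by eventually_elim (auto intro: order_trans[OF _ less_imp_le[OF exp_gt_self]])
  have W_int: "integrable M W"
    using W_abs by (intro Bochner_Integration.integrable_bound[OF quadratic_mgf_boundD(1)[OF W_bound, of 1] W_meas]) auto
  have f_int: "integrable M f"
    using fW by (intro Bochner_Integration.integrable_bound[OF W_int f_meas]) (auto intro: order_trans)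
  define m where "m = integral\<^sup>L M f"
  have "\<bar>m\<bar> \<le> (\<integral>x. \<bar>f x\<bar> \<partial>M)" unfolding m_def by (rule integral_abs_bound)
  also have "\<dots> \<le> (\<integral>x. exp (1 * W x) \<partial>M)"
    using fW W_abs
    by (intro integral_mono_AE integrable_abs f_int quadratic_mgf_boundD(1)[OF W_bound]) auto
  also have "\<dots> \<le> exp (2 * c)" using quadratic_mgf_boundD(2)[OF W_bound, of 1] by (simp add: mult.commute)
  finally have m_le: "\<bar>m\<bar> \<le> exp (2 * c)" .
  have shifted_bound: "quadratic_mgf_bound M (\<lambda>x. W x + \<bar>m\<bar>) (c + exp (2 * c))"
    using quadratic_mgf_bound_add_const[OF W_bound, of "\<bar>m\<bar>"] m_le
    by (auto intro: quadratic_mgf_bound_mono)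
  have centered: "AE x in M. \<bar>f x - m\<bar> \<le> W x + \<bar>m\<bar>" using fW by eventually_elim linarith
  have E0: "integral\<^sup>L M (\<lambda>x. f x - m) = 0" using f_int by (simp add: m_def prob_space)
  note mgf = centered_mgf_le_if_abs_le[OF assms(1) _ E0 centered shifted_bound]
  show ?thesis
    unfolding subgaussian_def m_def[symmetric]
  proof (intro conjI allI f_int)
    fix l :: real
    show int: "integrable M (\<lambda>x. exp (l * (f x - m)))" using mgf(1) f_meas by simp
    show "ln (\<integral>x. exp (l * (f x - m)) \<partial>M) \<le> l\<^sup>2 * (4 * exp (5 * (c + exp (2 * c)))) / 2"
      unfolding ln_le_iff_le_exp[OF integral_exp_pos[OF assms(1) int]]
      using mgf(2)[of l] f_meas by (simp add: mult_ac)
  qed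
qed

lemma (in product_prob_space) integrable_component:
  fixes g :: "'a \<Rightarrow> 'b::{banach, second_countable_topology}"
  assumes "i \<in> I" and g: "integrable (M i) g"
  shows "integrable (PiM I M) (\<lambda>\<omega>. g (\<omega> i))"
proof -
  have "(\<lambda>\<omega>. \<omega> i) \<in> measurable (PiM I M) (M i)"
    using assms(1) by (rule measurable_component_singleton)
  then show ?thesis
    using g integrable_distr_eq[where g = "\<lambda>\<omega>. \<omega> i" and M = "PiM I M" and N = "M i" and f = g]
    by (simp add: PiM_component[OF assms(1)])
qed

lemma (in product_prob_space) integral_component:
  fixes g :: "'a \<Rightarrow> 'b::{banach, second_countable_topology}"
  assumes "i \<in> I" and g: "integrable (M i) g"
  shows "(\<integral>\<omega>. g (\<omega> i) \<partial>PiM I M) = integral\<^sup>L (M i) g"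
proof -
  have "(\<lambda>\<omega>. \<omega> i) \<in> measurable (PiM I M) (M i)"
    using assms(1) by (rule measurable_component_singleton)
  then show ?thesis
    using g integral_distr[where g = "\<lambda>\<omega>. \<omega> i" and M = "PiM I M" and N = "M i" and f = g]
    by (simp add: PiM_component[OF assms(1)])
qed

lemma (in finite_product_prob_space) mgf_sum_components:
  fixes l :: real
  assumes int: "\<And>i. i \<in> I \<Longrightarrow> integrable (M i) (\<lambda>x. exp (l * f i x))"
  shows "integrable (PiM I M) (\<lambda>\<omega>. exp (l * (\<Sum>i\<in>I. f i (\<omega> i))))"
    and "(\<integral>\<omega>. exp (l * (\<Sum>i\<in>I. f i (\<omega> i))) \<partial>PiM I M)
      = (\<Prod>i\<in>I. \<integral>x. exp (l * f i x) \<partial>M i)"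
proof -
  have factor: "exp (l * (\<Sum>i\<in>I. f i (\<omega> i))) = (\<Prod>i\<in>I. exp (l * f i (\<omega> i)))" for \<omega>
    by (simp add: sum_distrib_left exp_sum finite_index)
  show "integrable (PiM I M) (\<lambda>\<omega>. exp (l * (\<Sum>i\<in>I. f i (\<omega> i))))"
    unfolding factor by (rule product_integrable_prod[OF finite_index int])
  show "(\<integral>\<omega>. exp (l * (\<Sum>i\<in>I. f i (\<omega> i))) \<partial>PiM I M)
      = (\<Prod>i\<in>I. \<integral>x. exp (l * f i x) \<partial>M i)"
    unfolding factor by (rule product_integral_prod[OF finite_index int])
qed

lemma (in finite_product_prob_space) subgaussian_sum_PiM:
  assumes sg: "\<And>i. i \<in> I \<Longrightarrow> subgaussian (M i) (f i) (\<sigma>2 i)"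
  shows "subgaussian (PiM I M) (\<lambda>\<omega>. \<Sum>i\<in>I. f i (\<omega> i)) (\<Sum>i\<in>I. \<sigma>2 i)"
proof -
  define m where "m i = integral\<^sup>L (M i) (f i)" for i
  have f_int: "integrable (M i) (f i)" if "i \<in> I" for i
    using sg[OF that] unfolding subgaussian_def by blast
  have mean: "(\<integral>\<omega>. (\<Sum>i\<in>I. f i (\<omega> i)) \<partial>PiM I M) = (\<Sum>i\<in>I. m i)"
    by (simp add: m_def Bochner_Integration.integral_sum integrable_component integral_component f_int)
  have centre: "(\<Sum>i\<in>I. f i (\<omega> i)) - (\<Sum>i\<in>I. m i) = (\<Sum>i\<in>I. f i (\<omega> i) - m i)" for \<omega>
    by (simp add: sum_subtractf)
  show ?thesis
    unfolding subgaussian_def mean centre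
  proof (intro conjI allI)
    show "integrable (PiM I M) (\<lambda>\<omega>. \<Sum>i\<in>I. f i (\<omega> i))"
      by (intro Bochner_Integration.integrable_sum integrable_component f_int)
    fix l :: real
    have int: "integrable (M i) (\<lambda>x. exp (l * (f i x - m i)))"
      and ln_le: "ln (\<integral>x. exp (l * (f i x - m i)) \<partial>M i) \<le> l\<^sup>2 * \<sigma>2 i / 2" if "i \<in> I" for i
      using sg[OF that] unfolding subgaussian_def m_def by blast+
    show "integrable (PiM I M) (\<lambda>\<omega>. exp (l * (\<Sum>i\<in>I. f i (\<omega> i) - m i)))"
      by (rule mgf_sum_components(1)[OF int])
    have "(\<integral>\<omega>. exp (l * (\<Sum>i\<in>I. f i (\<omega> i) - m i)) \<partial>PiM I M)
        = (\<Prod>i\<in>I. \<integral>x. exp (l * (f i x - m i)) \<partial>M i)"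
      by (rule mgf_sum_components(2)[OF int])
    then have "ln (\<integral>\<omega>. exp (l * (\<Sum>i\<in>I. f i (\<omega> i) - m i)) \<partial>PiM I M)
        = (\<Sum>i\<in>I. ln (\<integral>x. exp (l * (f i x - m i)) \<partial>M i))"
      using integral_exp_pos[OF prob_space int]
      by (simp add: ln_prod[OF finite_index] less_imp_neq[symmetric])
    also have "\<dots> \<le> (\<Sum>i\<in>I. l\<^sup>2 * \<sigma>2 i / 2)" by (intro sum_mono ln_le)
    also have "\<dots> = l\<^sup>2 * (\<Sum>i\<in>I. \<sigma>2 i) / 2" by (simp add: sum_distrib_left sum_divide_distrib)
    finally show "ln (\<integral>\<omega>. exp (l * (\<Sum>i\<in>I. f i (\<omega> i) - m i)) \<partial>PiM I M)
        \<le> l\<^sup>2 * (\<Sum>i\<in>I. \<sigma>2 i) / 2" .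
  qed
qed

lemma finite_product_prob_space_iid:
  assumes "prob_space Q" and "finite I"
  shows "finite_product_prob_space (\<lambda>_. Q) I"
  using assms
  by (simp add: finite_product_prob_space_def finite_product_sigma_finite_def
      finite_product_sigma_finite_axioms_def product_prob_space_def product_prob_space_axioms_def
      product_sigma_finite_def prob_space_imp_sigma_finite)

lemma subgaussian_sum_iid:
  assumes "prob_space Q" and "subgaussian Q f \<sigma>2"
  shows "subgaussian (PiM {..<n} (\<lambda>_. Q)) (\<lambda>ys. \<Sum>i<n. f (ys i)) (real n * \<sigma>2)"
  using finite_product_prob_space.subgaussian_sum_PiM[OF finite_product_prob_space_iid[OF assms(1)],
      of "{..<n}" "\<lambda>_. f" "\<lambda>_. \<sigma>2"] assms(2)
  by simp

lemma prob_simplex_weighted_sum_bounds: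
  assumes w: "w \<in> prob_simplex K" and lower: "\<And>k. k < K \<Longrightarrow> a \<le> x k"
    and upper: "\<And>k. k < K \<Longrightarrow> x k \<le> b"
  shows "a \<le> (\<Sum>k<K. w k * x k)" and "(\<Sum>k<K. w k * x k) \<le> b"
proof -
  have w0: "\<And>k. k < K \<Longrightarrow> 0 \<le> w k" and w1: "(\<Sum>k<K. w k) = 1"
    using w by (auto simp: prob_simplex_def)
  have "a = (\<Sum>k<K. w k * a)" using w1 by (simp flip: sum_distrib_right)
  also have "\<dots> \<le> (\<Sum>k<K. w k * x k)" by (intro sum_mono mult_left_mono lower w0) auto
  finally show "a \<le> (\<Sum>k<K. w k * x k)" .
  have "(\<Sum>k<K. w k * x k) \<le> (\<Sum>k<K. w k * b)" by (intro sum_mono mult_left_mono upper w0) auto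
  also have "\<dots> = b" using w1 by (simp flip: sum_distrib_right)
  finally show "(\<Sum>k<K. w k * x k) \<le> b" .
qed

lemma borel_measurable_jensen_gap:
  assumes "\<And>k. k < K \<Longrightarrow> p k \<in> borel_measurable M"
  shows "jensen_gap K p w \<in> borel_measurable M"
  unfolding jensen_gap_def[abs_def]
  by (intro borel_measurable_add borel_measurable_uminus borel_measurable_sum borel_measurable_times
      borel_measurable_const borel_measurable_ln assms) auto

lemma jensen_gap_abs_le:
  assumes w: "w \<in> prob_simplex K" and pos: "\<And>k. k < K \<Longrightarrow> 0 < p k y"
  shows "\<bar>jensen_gap K p w y\<bar> \<le> 2 * (\<Sum>k<K. \<bar>ln (p k y)\<bar>)"
proof -
  define L where "L = (\<Sum>k<K. \<bar>ln (p k y)\<bar>)"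
  have abs_ln: "\<bar>ln (p k y)\<bar> \<le> L" if "k < K" for k
    unfolding L_def by (rule member_le_sum) (use that in auto)
  have ln_lower: "- L \<le> ln (p k y)" and ln_upper: "ln (p k y) \<le> L" if "k < K" for k
    using abs_ln[OF that] by auto
  have p_lower: "exp (- L) \<le> p k y" and p_upper: "p k y \<le> exp L" if "k < K" for k
    using ln_lower[OF that] ln_upper[OF that] pos[OF that]
    by (simp_all add: ln_ge_iff ln_le_iff_le_exp)
  define S where "S = (\<Sum>k<K. w k * p k y)"
  have S_lower: "exp (- L) \<le> S" and S_upper: "S \<le> exp L"
    unfolding S_def using prob_simplex_weighted_sum_bounds[OF w p_lower p_upper] by auto
  moreover have "0 < S" using S_lower exp_gt_zero[of "- L"] by linarith
  ultimately have "- L \<le> ln S" and "ln S \<le> L" by (simp_all add: ln_ge_iff ln_le_iff_le_exp)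
  moreover have "- L \<le> (\<Sum>k<K. w k * ln (p k y))" and "(\<Sum>k<K. w k * ln (p k y)) \<le> L"
    using prob_simplex_weighted_sum_bounds[OF w ln_lower ln_upper] by auto
  ultimately show ?thesis unfolding jensen_gap_def S_def[symmetric] L_def[symmetric] by linarith
qed

theorem theorem3p2:
  fixes Q :: "'a measure" and p :: "nat \<Rightarrow> 'a \<Rightarrow> real"
    and K n :: nat and s :: real
  assumes "prob_space Q"
    and "K \<ge> 1" and "n \<ge> 1"
    and "\<And>k. k < K \<Longrightarrow> p k \<in> borel_measurable Q"
    and "\<And>k. k < K \<Longrightarrow> AE y in Q. p k y > 0"
    and "s > 0"
    and "\<And>k. k < K \<Longrightarrow> subgaussian Q (\<lambda>y. - ln (p k y)) (s\<^sup>2)"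
  shows "\<exists>s'>0. \<forall>w \<in> prob_simplex K.
           subgaussian (PiM {..<n} (\<lambda>_. Q))
             (\<lambda>ys. \<Sum>i<n. jensen_gap K p w (ys i)) (real n * s')"
proof -
  define W where "W y = (\<Sum>k<K. \<bar>2 * - ln (p k y)\<bar>)" for y
  have W_meas: "W \<in> borel_measurable Q"
    unfolding W_def by (intro borel_measurable_sum borel_measurable_abs borel_measurable_times
        borel_measurable_const borel_measurable_uminus borel_measurable_ln assms(4)) auto
  obtain c where W_bound: "quadratic_mgf_bound Q W c"
    using quadratic_mgf_bound_sum_abs_subgaussian[OF assms(1), of "{..<K}" "\<lambda>k y. - ln (p k y)" "s\<^sup>2" 2]
      assms(2,4,7) unfolding W_def by (auto simp: lessThan_empty_iff)
  have all_pos: "AE y in Q. \<forall>k\<in>{..<K}. 0 < p k y"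
    using assms(5) by (intro AE_finite_allI) auto
  define s' where "s' = 4 * exp (5 * (c + exp (2 * c)))"
  have "subgaussian Q (jensen_gap K p w) s'" if w: "w \<in> prob_simplex K" for w
  proof -
    have gap_le: "AE y in Q. \<bar>jensen_gap K p w y\<bar> \<le> W y"
      using all_pos
    proof eventually_elim
      case (elim y)
      then have "\<bar>jensen_gap K p w y\<bar> \<le> 2 * (\<Sum>k<K. \<bar>ln (p k y)\<bar>)"
        by (intro jensen_gap_abs_le[OF w]) auto
      then show ?case by (simp add: W_def abs_mult sum_distrib_left)
    qed
    show ?thesis
      using subgaussian_if_abs_le[OF assms(1) borel_measurable_jensen_gap[OF assms(4)] W_meas gap_le W_bound]
      unfolding s'_def .
  qed
  then show ?thesis
    by (intro exI[of _ s'] conjI ballI subgaussian_sum_iid[OF assms(1)]) (simp_all add: s'_def)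
qed

end
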